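(* Let $G=(V,E)$ be a graph on $n$ vertices, $w$ a legal weight assignment for $G$, $0<\beta<1$, and $(z_v)_{v\in V}$ complex activities with $|z_v|\ge1$ for all $v$, such that $Z_w(G)\neq0$. Then $\Re\left(\frac{\mathcal{D}_GZ_w(G)}{Z_w(G)}\right)\ge \frac n2$.
   Context: A weight assignment $w:V\to\mathbb{Z}_{>0}$ is legal if $w(v)\ge\deg(v)$ for every $v$. $Z_w(G)=\sum_{\sigma\in\{+,-\}^V}\beta^{d(\sigma)}\prod_{v:\sigma(v)=+}z_v^{w(v)}$, where $d(\sigma)$ is the number of edges $\{u,v\}$ with $\sigma(u)\ne\sigma(v)$, and $\mathcal{D}_G=\sum_{v\in V}z_v\frac{\partial}{\partial z_v}$. *)

theory Defs
  imports "HOL-Analysis.Analysis"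
begin

definition simple_graph :: "'a set \<Rightarrow> 'a set set \<Rightarrow> bool" where
  "simple_graph V E \<longleftrightarrow> finite V \<and> (\<forall>e\<in>E. e \<subseteq> V \<and> card e = 2)"

definition degree :: "'a set set \<Rightarrow> 'a \<Rightarrow> nat" where
  "degree E v = card {e\<in>E. v \<in> e}"

definition legal_weight :: "'a set \<Rightarrow> 'a set set \<Rightarrow> ('a \<Rightarrow> nat) \<Rightarrow> bool" where
  "legal_weight V E w \<longleftrightarrow> (\<forall>v\<in>V. 0 < w v \<and> degree E v \<le> w v)"

text \<open>A sign configuration sigma is encoded by the set S of vertices with sign +.
  cut_size E S = number of edges whose endpoints receive different signs.\<close>
definition cut_size :: "'a set set \<Rightarrow> 'a set \<Rightarrow> nat" where
  "cut_size E S = card {e\<in>E. e \<inter> S \<noteq> {} \<and> e - S \<noteq> {}}"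

definition Zw :: "'a set \<Rightarrow> 'a set set \<Rightarrow> ('a \<Rightarrow> nat) \<Rightarrow> real \<Rightarrow> ('a \<Rightarrow> complex) \<Rightarrow> complex" where
  "Zw V E w \<beta> z = (\<Sum>S\<in>Pow V. complex_of_real (\<beta> ^ cut_size E S) * (\<Prod>v\<in>S. z v ^ w v))"

definition DG :: "'a set \<Rightarrow> (('a \<Rightarrow> complex) \<Rightarrow> complex) \<Rightarrow> ('a \<Rightarrow> complex) \<Rightarrow> complex" where
  "DG V F z = (\<Sum>v\<in>V. z v * deriv (\<lambda>t. F (z(v := t))) (z v))"

end

theory Submission
  imports Defs "HOL-Computational_Algebra.Fundamental_Theorem_Algebra"
begin

(* Write W(S) = sum of w over S and consider the one-variable polynomial
     p(l) = sum over S subset V of beta^cut(S) * (prod_{u in S} z_u^(w u)) * l^W(S),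
   so that p(l) = Z_w(G) evaluated at the activities l*z_v.  Then p(1) = Z_w(G) and,
   by Euler's identity for monomials, p'(1) = D_G Z_w(G).
   (1) Lee-Yang circle theorem: the Ising polynomial sum_S beta^cut(S) prod_{v in S} x_v
       does not vanish when all |x_v| < 1, proved by induction on the edges using
       Asano contraction; by the symmetry S <-> V - S it also does not vanish when
       all |x_v| > 1.  Hence every root l of p satisfies |l| <= 1.
   (2) If all roots of p lie in the closed unit disc and p(1) <> 0, then
       Re(p'(1)/p(1)) = sum_roots Re(1/(1-r)) >= deg(p)/2.
   (3) The top coefficient of l^W(V) is beta^0 * prod z_v^(w v) <> 0, so
       deg(p) >= W(V) >= |V| since all weights are positive (this positivity is
       the only part of legality the argument needs). *)

section \<open>Asano contraction\<close>

lemma parallelogram_law_complex: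
  "cmod (a + b)^2 + cmod (a - b)^2 = 2 * cmod a ^ 2 + 2 * cmod b ^ 2"
  unfolding cmod_power2 by (simp add: power2_eq_square algebra_simps)

text \<open>If a bilinear polynomial in a, b has no zeros in the open bidisc, then for every
  fixed b in the disc its coefficient of a is dominated by its constant term, since
  otherwise the root in a lies in the disc.\<close>
lemma bilinear_nonvanishing_coeff_bound:
  fixes A B C D :: complex
  assumes H: "\<And>a b. cmod a < 1 \<Longrightarrow> cmod b < 1 \<Longrightarrow> A + B*a + C*b + D*a*b \<noteq> 0"
    and b: "cmod b < 1"
  shows "cmod (B + D*b) \<le> cmod (A + C*b)"
proof (rule ccontr)
  assume "\<not> ?thesis"
  hence lt: "cmod (A + C*b) < cmod (B + D*b)" by simp
  hence nz: "B + D*b \<noteq> 0" by auto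
  define a where "a = - (A + C*b) / (B + D*b)"
  have "cmod a = cmod (A + C*b) / cmod (B + D*b)" unfolding a_def norm_divide norm_minus_cancel ..
  hence "cmod a < 1" using lt nz by (simp add: divide_less_eq)
  moreover have "A + B*a + C*b + D*a*b = 0"
    using nz by (simp add: a_def field_simps)
  ultimately show False using H b by blast
qed

text \<open>The proof shows
  r |D| <= |A| for every r < 1 by combining the coefficient bounds at b = r and b = -r
  with the parallelogram law.\<close>
lemma asano_contraction:
  fixes A B C D :: complex
  assumes H: "\<And>a b. cmod a < 1 \<Longrightarrow> cmod b < 1 \<Longrightarrow> A + B*a + C*b + D*a*b \<noteq> 0"
    and z: "cmod z < 1"
  shows "A + D*z \<noteq> 0"
proof -
  have A0: "A \<noteq> 0" using H[of 0 0] by simp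
  define r where "r = (1 + cmod z) / 2"
  have r0: "0 \<le> r" and r1: "r < 1" and rz: "cmod z < r" using z by (auto simp: r_def)
  have h1: "cmod (B + D*b) ^ 2 \<le> cmod (A + C*b) ^2" if "cmod b < 1" for b
    using bilinear_nonvanishing_coeff_bound[OF H that] by (simp add: power_mono)
  have h2: "cmod (C + D*a) ^ 2 \<le> cmod (A + B*a) ^2" if "cmod a < 1" for a
  proof -
    have H': "A + C*b + B*a + D*b*a \<noteq> 0" if "cmod b < 1" "cmod a < 1" for a b
      using H[OF that(2,1)] by (simp add: algebra_simps)
    show ?thesis using bilinear_nonvanishing_coeff_bound[OF H' that] by (simp add: power_mono)
  qed
  have rr: "cmod (of_real r :: complex) < 1" "cmod (- of_real r :: complex) < 1" using r0 r1 by auto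
  have e1: "2 * cmod B ^2 + 2 * cmod (D * of_real r)^2 \<le> 2 * cmod A ^2 + 2 * cmod (C * of_real r)^2"
  proof -
    have "cmod (B + D * of_real r) ^ 2 \<le> cmod (A + C * of_real r) ^2" using h1[OF rr(1)] .
    moreover have "cmod (B - D * of_real r) ^ 2 \<le> cmod (A - C * of_real r) ^2"
      using h1[OF rr(2)] by simp
    ultimately show ?thesis
      using parallelogram_law_complex[of B "D * of_real r"]
        parallelogram_law_complex[of A "C * of_real r"] by linarith
  qed
  have e2: "2 * cmod C ^2 + 2 * cmod (D * of_real r)^2 \<le> 2 * cmod A ^2 + 2 * cmod (B * of_real r)^2"
  proof -
    have "cmod (C + D * of_real r) ^ 2 \<le> cmod (A + B * of_real r) ^2" using h2[OF rr(1)] .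
    moreover have "cmod (C - D * of_real r) ^ 2 \<le> cmod (A - B * of_real r) ^2"
      using h2[OF rr(2)] by simp
    ultimately show ?thesis
      using parallelogram_law_complex[of C "D * of_real r"]
        parallelogram_law_complex[of A "B * of_real r"] by linarith
  qed
  have "(r * cmod D)^2 \<le> cmod A ^ 2"
  proof -
    have "r^2 \<le> 1" using r0 r1 by (simp add: power_le_one)
    hence "r^2 * cmod B ^2 \<le> cmod B ^2" "r^2 * cmod C ^2 \<le> cmod C ^2"
      by (auto intro: mult_left_le_one_le)
    moreover have "2 * cmod B ^2 + 2 * (r^2 * cmod D^2) \<le> 2 * cmod A ^2 + 2 * (r^2 * cmod C^2)"
      using e1 by (simp add: norm_mult power_mult_distrib mult.commute)
    moreover have "2 * cmod C ^2 + 2 * (r^2 * cmod D^2) \<le> 2 * cmod A ^2 + 2 * (r^2 * cmod B^2)"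
      using e2 by (simp add: norm_mult power_mult_distrib mult.commute)
    ultimately show ?thesis by (simp add: power_mult_distrib)
  qed
  hence rD: "r * cmod D \<le> cmod A" using r0 by (simp add: abs_le_square_iff power2_le_iff_abs_le)
  show ?thesis
  proof (cases "D = 0")
    case True thus ?thesis using A0 by simp
  next
    case False
    hence "cmod (D*z) < r * cmod D" using rz by (simp add: norm_mult)
    hence "cmod (D*z) < cmod A" using rD by simp
    thus ?thesis by (metis add_eq_0_iff norm_minus_cancel order_less_irrefl)
  qed
qed

section \<open>The Lee--Yang circle theorem\<close>

text \<open>The partition function of a single edge, 1 + beta a + beta b + a b, has no zeros in
  the open bidisc when 0 < beta < 1: solving for b gives the Moebius image of a, whose
  modulus is at least 1.\<close>
lemma edge_factor_nonzero:
  fixes a b :: complex and \<beta> :: real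
  assumes "0 < \<beta>" "\<beta> < 1" "cmod a < 1" "cmod b < 1"
  shows "1 + \<beta>*a + \<beta>*b + a*b \<noteq> 0"
proof
  assume eq: "1 + \<beta>*a + \<beta>*b + a*b = 0"
  have "(\<beta> + a) * b + (1 + \<beta>*a) = 1 + \<beta>*a + \<beta>*b + a*b" by (simp add: algebra_simps)
  hence eq2: "(\<beta> + a) * b = - (1 + \<beta>*a)" using eq by (metis eq_neg_iff_add_eq_0)
  have "\<beta>^2 < 1" using assms by (simp add: abs_square_less_1)
  show False
  proof (cases "\<beta> + a = 0")
    case True
    hence "a = - \<beta>" by (simp add: add_eq_0_iff)
    hence "1 + \<beta>*a = of_real (1 - \<beta>^2)" by (simp add: power2_eq_square)
    hence "(of_real (1 - \<beta>^2) :: complex) = 0" using eq2 True by simp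
    hence "1 - \<beta>^2 = 0" by (simp only: of_real_eq_0_iff)
    thus False using \<open>\<beta>^2 < 1\<close> by simp
  next
    case False
    have "cmod (1 + \<beta>*a) = cmod (\<beta> + a) * cmod b"
      using eq2 by (metis norm_minus_cancel norm_mult)
    also have "\<dots> < cmod (\<beta> + a)" using False assms by simp
    finally have "cmod (1 + \<beta>*a)^2 < cmod (\<beta> + a)^2" by (simp add: power_strict_mono)
    moreover have "cmod (1 + \<beta>*a)^2 - cmod (\<beta> + a)^2 = (1 - \<beta>^2) * (1 - cmod a ^2)"
      unfolding cmod_power2 by (simp add: power2_eq_square algebra_simps)
    moreover have "(1 - \<beta>^2) * (1 - cmod a ^2) > 0"
      using assms \<open>\<beta>^2 < 1\<close> by (simp add: abs_square_less_1)
    ultimately show False by linarith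
  qed
qed

text \<open>Adding one edge preserves non-vanishing in the bidisc: multiply the polynomial in
  s, t by the edge factors in (s, c) and (t, y) and contract twice with Asano's lemma,
  which replaces the coefficients of s and t by beta times themselves.\<close>
lemma add_edge_nonvanishing:
  fixes P0 P1 P2 P3 s t :: complex and \<beta> :: real
  assumes H: "\<And>s t. cmod s < 1 \<Longrightarrow> cmod t < 1 \<Longrightarrow> P0 + s * P1 + t * P2 + s * t * P3 \<noteq> 0"
    and b: "0 < \<beta>" "\<beta> < 1" and st: "cmod s < 1" "cmod t < 1"
  shows "P0 + \<beta> * s * P1 + \<beta> * t * P2 + s * t * P3 \<noteq> 0"
proof -
  have first: "(P0 + t * P2) * (1 + \<beta> * y) + ((P1 + t * P3) * (\<beta> + y)) * x \<noteq> 0"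
    if t: "cmod t < 1" and y: "cmod y < 1" and x: "cmod x < 1" for t y x :: complex
  proof (rule asano_contraction[OF _ x])
    fix a c :: complex assume a: "cmod a < 1" and c: "cmod c < 1"
    have "(P0 + t * P2) * (1 + \<beta> * y) + (P1 + t * P3) * (1 + \<beta> * y) * a
          + (P0 + t * P2) * (\<beta> + y) * c + (P1 + t * P3) * (\<beta> + y) * a * c
        = (P0 + a * P1 + t * P2 + a * t * P3) * (1 + \<beta> * c + \<beta> * y + c * y)"
      by (simp add: algebra_simps)
    also have "\<dots> \<noteq> 0" using H[OF a t] edge_factor_nonzero[OF b c y] by simp
    finally show "(P0 + t * P2) * (1 + \<beta> * y) + (P1 + t * P3) * (1 + \<beta> * y) * a
          + (P0 + t * P2) * (\<beta> + y) * c + (P1 + t * P3) * (\<beta> + y) * a * c \<noteq> 0" .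
  qed
  have "(P0 + s * \<beta> * P1) + (\<beta> * P2 + s * P3) * t \<noteq> 0"
  proof (rule asano_contraction[OF _ st(2)])
    fix a c :: complex assume a: "cmod a < 1" and c: "cmod c < 1"
    have "(P0 + s * \<beta> * P1) + (P2 + s * \<beta> * P3) * a + (\<beta> * P0 + s * P1) * c
          + (\<beta> * P2 + s * P3) * a * c
        = (P0 + a * P2) * (1 + \<beta> * c) + ((P1 + a * P3) * (\<beta> + c)) * s"
      by (simp add: algebra_simps)
    also have "\<dots> \<noteq> 0" using first[OF a c st(1)] .
    finally show "(P0 + s * \<beta> * P1) + (P2 + s * \<beta> * P3) * a + (\<beta> * P0 + s * P1) * c
          + (\<beta> * P2 + s * P3) * a * c \<noteq> 0" .
  qed
  thus ?thesis by (simp add: algebra_simps)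
qed

text \<open>The multi-affine Ising polynomial in the activities x; Z_w is its specialisation at
  x_v = z_v^(w v).\<close>
definition ising :: "'a set \<Rightarrow> 'a set set \<Rightarrow> real \<Rightarrow> ('a \<Rightarrow> complex) \<Rightarrow> complex" where
  "ising V E \<beta> x = (\<Sum>S\<in>Pow V. complex_of_real (\<beta> ^ cut_size E S) * prod x S)"

definition pair_part ::
  "'a set \<Rightarrow> ('a set \<Rightarrow> complex) \<Rightarrow> 'a \<Rightarrow> 'a \<Rightarrow> bool \<Rightarrow> bool \<Rightarrow> ('a \<Rightarrow> complex) \<Rightarrow> complex" where
  "pair_part V c u v a b x =
     (\<Sum>S\<in>Pow V. if (u\<in>S) = a \<and> (v\<in>S) = b then c S * prod x (S - {u,v}) else 0)"

lemma prod_update_pair: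
  assumes "finite S" "u \<noteq> v"
  shows "prod (x(u:=s, v:=t)) S
    = (if u\<in>S then s else 1) * (if v\<in>S then t else 1) * prod x (S - {u,v})"
proof -
  have "prod (x(u:=s, v:=t)) S
      = prod (x(u:=s, v:=t)) (S - (S \<inter> {u,v})) * prod (x(u:=s, v:=t)) (S \<inter> {u,v})"
    using assms by (intro prod.subset_diff) auto
  also have "S - (S \<inter> {u,v}) = S - {u,v}" by blast
  also have "prod (x(u:=s, v:=t)) (S - {u,v}) = prod x (S - {u,v})" by (rule prod.cong) auto
  also have "prod (x(u:=s, v:=t)) (S \<inter> {u,v}) = (if u\<in>S then s else 1) * (if v\<in>S then t else 1)"
  proof -
    consider "u\<in>S" "v\<in>S" | "u\<in>S" "v\<notin>S" | "u\<notin>S" "v\<in>S" | "u\<notin>S" "v\<notin>S" by blast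
    thus ?thesis
    proof cases
      case 1 hence "S \<inter> {u,v} = {u,v}" by blast
      thus ?thesis using 1 assms by simp
    next
      case 2 hence "S \<inter> {u,v} = {u}" by blast
      thus ?thesis using 2 assms by simp
    next
      case 3 hence "S \<inter> {u,v} = {v}" by blast
      thus ?thesis using 3 assms by simp
    next
      case 4 hence "S \<inter> {u,v} = {}" by blast
      thus ?thesis using 4 assms by simp
    qed
  qed
  finally show ?thesis by (metis mult.commute)
qed

lemma pair_expansion:
  assumes "finite V" "u \<noteq> v"
  shows "(\<Sum>S\<in>Pow V. c S * prod (x(u:=s, v:=t)) S)
     = pair_part V c u v False False x + s * pair_part V c u v True False x
       + t * pair_part V c u v False True x + s * t * pair_part V c u v True True x"
  unfolding pair_part_def sum_distrib_left sum.distrib[symmetric]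
proof (rule sum.cong[OF refl])
  fix S assume "S \<in> Pow V"
  hence fS: "finite S" using assms(1) finite_subset by auto
  show "c S * prod (x(u:=s, v:=t)) S
      = (if (u\<in>S) = False \<and> (v\<in>S) = False then c S * prod x (S - {u,v}) else 0)
        + s * (if (u\<in>S) = True \<and> (v\<in>S) = False then c S * prod x (S - {u,v}) else 0)
        + t * (if (u\<in>S) = False \<and> (v\<in>S) = True then c S * prod x (S - {u,v}) else 0)
        + s * t * (if (u\<in>S) = True \<and> (v\<in>S) = True then c S * prod x (S - {u,v}) else 0)"
    unfolding prod_update_pair[OF fS assms(2)] by (auto simp: algebra_simps)
qed

lemma pair_part_scale:
  assumes "\<And>S. c' S = c S * k (u\<in>S) (v\<in>S)"
  shows "pair_part V c' u v a b x = k a b * pair_part V c u v a b x"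
  unfolding pair_part_def sum_distrib_left by (rule sum.cong) (auto simp: assms)

lemma cut_size_insert:
  assumes "finite F" "e \<notin> F"
  shows "cut_size (insert e F) S
    = cut_size F S + (if e \<inter> S \<noteq> {} \<and> e - S \<noteq> {} then 1 else 0)"
proof -
  have fin: "finite {e'\<in>F. e' \<inter> S \<noteq> {} \<and> e' - S \<noteq> {}}" using assms by simp
  show ?thesis
  proof (cases "e \<inter> S \<noteq> {} \<and> e - S \<noteq> {}")
    case True
    hence "{e'\<in>insert e F. e' \<inter> S \<noteq> {} \<and> e' - S \<noteq> {}}
        = insert e {e'\<in>F. e' \<inter> S \<noteq> {} \<and> e' - S \<noteq> {}}" by blast
    thus ?thesis using True fin assms by (simp add: cut_size_def)
  next
    case False
    hence "{e'\<in>insert e F. e' \<inter> S \<noteq> {} \<and> e' - S \<noteq> {}} = {e'\<in>F. e' \<inter> S \<noteq> {} \<and> e' - S \<noteq> {}}"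
      by blast
    thus ?thesis using False by (simp add: cut_size_def)
  qed
qed

text \<open>With no edges
  the polynomial is the product of the factors 1 + x_v; an edge {u, v} multiplies the
  coefficients of terms separating u and v by beta, which is exactly the transformation
  in the lemma add_edge_nonvanishing.\<close>
lemma lee_yang_disc:
  fixes \<beta> :: real
  assumes V: "finite V" and b: "0 < \<beta>" "\<beta> < 1"
  shows "finite F \<Longrightarrow> \<forall>e\<in>F. e \<subseteq> V \<and> card e = 2 \<Longrightarrow> \<forall>v\<in>V. cmod (x v) < 1
    \<Longrightarrow> ising V F \<beta> x \<noteq> 0"
proof (induction F arbitrary: x rule: finite_induct)
  case empty
  have "ising V {} \<beta> x = (\<Sum>S\<in>Pow V. prod x S * prod (\<lambda>_. 1) (V - S))"
    by (simp add: ising_def cut_size_def)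
  also have "\<dots> = (\<Prod>v\<in>V. x v + 1)" by (rule prod_add[OF V, symmetric])
  also have "\<dots> \<noteq> 0"
  proof -
    have "x v + 1 \<noteq> 0" if "v \<in> V" for v
      using empty.prems(2) that by (metis add.commute add_eq_0_iff norm_minus_cancel norm_one
        order_less_irrefl)
    thus ?thesis using V by simp
  qed
  finally show ?case .
next
  case (insert e F)
  obtain u v where e: "e = {u,v}" and uv: "u \<noteq> v"
    using insert.prems(1) by (auto simp: card_2_iff)
  have uV: "u \<in> V" and vV: "v \<in> V" using insert.prems(1) e by auto
  define c where "c S = complex_of_real (\<beta> ^ cut_size F S)" for S
  define c' where "c' S = complex_of_real (\<beta> ^ cut_size (insert e F) S)" for S
  define k where "k a b = (if a \<noteq> b then complex_of_real \<beta> else 1)" for a b :: bool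
  have cc: "c' S = c S * k (u\<in>S) (v\<in>S)" for S
  proof -
    have "(e \<inter> S \<noteq> {} \<and> e - S \<noteq> {}) = ((u\<in>S) \<noteq> (v\<in>S))" using e by auto
    thus ?thesis unfolding c'_def c_def k_def cut_size_insert[OF insert.hyps(1,2)]
      by (simp add: power_add)
  qed
  let ?P = "\<lambda>a b. pair_part V c u v a b x"
  have H: "?P False False + s * ?P True False + t * ?P False True + s * t * ?P True True \<noteq> 0"
    if "cmod s < 1" "cmod t < 1" for s t
  proof -
    have "ising V F \<beta> (x(u:=s, v:=t)) \<noteq> 0"
      by (rule insert.IH) (use insert.prems that in auto)
    thus ?thesis unfolding ising_def c_def[symmetric] pair_expansion[OF V uv] .
  qed
  have "ising V (insert e F) \<beta> x = ising V (insert e F) \<beta> (x(u:= x u, v:= x v))" by simp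
  also have "\<dots> = ?P False False + \<beta> * x u * ?P True False + \<beta> * x v * ?P False True
        + x u * x v * ?P True True"
    unfolding ising_def c'_def[symmetric] pair_expansion[OF V uv] pair_part_scale[of c' c k, OF cc]
    by (simp add: k_def algebra_simps)
  also have "\<dots> \<noteq> 0"
    by (rule add_edge_nonvanishing[OF H b]) (use insert.prems uV vV in auto)
  finally show ?case .
qed

lemma cut_size_complement:
  assumes "\<forall>e\<in>E. e \<subseteq> V"
  shows "cut_size E (V - S) = cut_size E S"
proof -
  have "{e\<in>E. e \<inter> (V - S) \<noteq> {} \<and> e - (V - S) \<noteq> {}} = {e\<in>E. e \<inter> S \<noteq> {} \<and> e - S \<noteq> {}}"
    using assms by blast
  thus ?thesis by (simp add: cut_size_def)
qed

text \<open>Spin-flip symmetry S \<leftrightarrow> V - S: the Ising polynomial is self-reciprocal.\<close>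
lemma ising_reciprocal:
  assumes V: "finite V" and E: "\<forall>e\<in>E. e \<subseteq> V" and x: "\<forall>v\<in>V. x v \<noteq> 0"
  shows "ising V E \<beta> x = prod x V * ising V E \<beta> (\<lambda>v. 1 / x v)"
proof -
  let ?c = "\<lambda>S. complex_of_real (\<beta> ^ cut_size E S)"
  have "prod x V * ising V E \<beta> (\<lambda>v. 1 / x v) = (\<Sum>S\<in>Pow V. ?c S * prod x (V - S))"
    unfolding ising_def sum_distrib_left
  proof (rule sum.cong[OF refl])
    fix S assume S: "S \<in> Pow V"
    have "prod x V = prod x (V - S) * prod x S" using S V by (intro prod.subset_diff) auto
    moreover have "prod x S * (\<Prod>v\<in>S. 1 / x v) = 1"
      unfolding prod.distrib[symmetric] using S x by (intro prod.neutral) auto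
    ultimately show "prod x V * (?c S * (\<Prod>v\<in>S. 1 / x v)) = ?c S * prod x (V - S)"
      by (simp add: algebra_simps)
  qed
  also have "\<dots> = (\<Sum>T\<in>Pow V. ?c T * prod x T)"
    by (rule sum.reindex_bij_witness[where i="\<lambda>S. V - S" and j="\<lambda>S. V - S"])
       (auto simp: cut_size_complement[OF E])
  finally show ?thesis unfolding ising_def by simp
qed

lemma lee_yang_exterior:
  fixes \<beta> :: real
  assumes V: "finite V" and b: "0 < \<beta>" "\<beta> < 1"
    and E: "finite E" "\<forall>e\<in>E. e \<subseteq> V \<and> card e = 2"
    and x: "\<forall>v\<in>V. cmod (x v) > 1"
  shows "ising V E \<beta> x \<noteq> 0"
proof -
  have x0: "\<forall>v\<in>V. x v \<noteq> 0" using x by auto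
  have "ising V E \<beta> (\<lambda>v. 1 / x v) \<noteq> 0"
    using lee_yang_disc[OF V b E] x by (simp add: norm_divide divide_less_eq)
  moreover have "prod x V \<noteq> 0" using V x0 by simp
  ultimately show ?thesis using ising_reciprocal[OF V _ x0] E(2) by auto
qed

lemma simple_graph_finite_edges:
  assumes "simple_graph V E"
  shows "finite E"
proof -
  have "E \<subseteq> Pow V" and "finite V" using assms by (auto simp: simple_graph_def)
  thus ?thesis using finite_subset by blast
qed

lemma Zw_nonzero_exterior:
  fixes \<beta> :: real
  assumes G: "simple_graph V E" and b: "0 < \<beta>" "\<beta> < 1"
    and w: "\<forall>v\<in>V. 0 < w v" and z: "\<forall>v\<in>V. 1 < cmod (z v)"
  shows "Zw V E w \<beta> z \<noteq> 0"
proof -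
  have "Zw V E w \<beta> z = ising V E \<beta> (\<lambda>v. z v ^ w v)" unfolding Zw_def ising_def ..
  moreover have "\<forall>v\<in>V. 1 < cmod (z v ^ w v)"
    using w z by (auto simp: norm_power intro: one_less_power)
  ultimately show ?thesis
    using lee_yang_exterior[OF _ b simple_graph_finite_edges[OF G]] G
    by (auto simp: simple_graph_def)
qed

section \<open>Logarithmic derivative of a polynomial with roots in the unit disc\<close>

lemma Re_inverse_one_minus_ge_half:
  fixes r :: complex
  assumes "cmod r \<le> 1" "r \<noteq> 1"
  shows "Re (1 / (1 - r)) \<ge> 1/2"
proof -
  have "1 - r \<noteq> 0" using assms by simp
  hence pos: "(Re (1 - r))^2 + (Im (1 - r))^2 > 0"
    by (metis complex_eq_iff zero_complex.sel sum_power2_gt_zero_iff)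
  have "(Re r)^2 + (Im r)^2 \<le> 1" using assms(1) unfolding cmod_def
    by (metis real_sqrt_le_1_iff)
  hence "(Re (1 - r))^2 + (Im (1 - r))^2 \<le> 2 * Re (1 - r)"
    by (simp add: power2_eq_square algebra_simps)
  thus ?thesis using pos by (simp add: Re_divide divide_simps)
qed

text \<open>p'(1)/p(1) is the sum of 1/(1 - r) over the roots r of p; each summand has real part
  at least 1/2.  Proved by splitting off one root at a time.\<close>
lemma Re_logderiv_ge_half_degree:
  fixes p :: "complex poly"
  shows "poly p 1 \<noteq> 0 \<Longrightarrow> (\<forall>r. poly p r = 0 \<longrightarrow> cmod r \<le> 1) \<Longrightarrow> Polynomial.degree p = n
    \<Longrightarrow> Re (poly (pderiv p) 1 / poly p 1) \<ge> real n / 2"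
proof (induction n arbitrary: p)
  case 0
  hence "pderiv p = 0" by (simp add: pderiv_eq_0_iff)
  thus ?case by simp
next
  case (Suc n)
  have "\<not> (\<exists>a l. a \<noteq> 0 \<and> l = 0 \<and> p = pCons a l)" using Suc.prems(3) by auto
  then obtain r where r: "poly p r = 0" using fundamental_theorem_of_algebra_alt by blast
  hence "[:-r, 1:] dvd p" by (simp add: dvd_iff_poly_eq_0)
  then obtain q where pq: "p = [:-r, 1:] * q" by (elim dvdE)
  have q0: "q \<noteq> 0" using Suc.prems(1) pq by auto
  have "Polynomial.degree p = 1 + Polynomial.degree q"
    unfolding pq by (subst degree_mult_eq) (use q0 in auto)
  hence dq: "Polynomial.degree q = n" using Suc.prems(3) by simp
  have r1: "r \<noteq> 1" using r Suc.prems(1) by auto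
  have rle: "cmod r \<le> 1" using r Suc.prems(2) by auto
  have q1: "poly q 1 \<noteq> 0" using Suc.prems(1) pq by simp
  have qr: "\<forall>s. poly q s = 0 \<longrightarrow> cmod s \<le> 1" using Suc.prems(2) pq by simp
  have "poly (pderiv p) 1 = (1 - r) * poly (pderiv q) 1 + poly q 1"
    unfolding pq pderiv_mult by (simp add: pderiv_pCons algebra_simps)
  moreover have "poly p 1 = (1 - r) * poly q 1" unfolding pq by (simp add: algebra_simps)
  ultimately have "poly (pderiv p) 1 / poly p 1
      = ((1 - r) * poly (pderiv q) 1 + poly q 1) / ((1 - r) * poly q 1)" by simp
  also have "\<dots> = poly (pderiv q) 1 / poly q 1 + 1 / (1 - r)"
    using r1 q1 by (simp add: field_simps)
  finally have "poly (pderiv p) 1 / poly p 1 = poly (pderiv q) 1 / poly q 1 + 1 / (1 - r)" .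
  thus ?case using Suc.IH[OF q1 qr dq] Re_inverse_one_minus_ge_half[OF rle r1] by simp
qed

section \<open>The operator D_G applied to Z_w\<close>

lemma prod_update_single:
  assumes "finite S"
  shows "(\<Prod>u\<in>S. (z(v:=t)) u ^ w u) = (if v\<in>S then t ^ w v else 1) * (\<Prod>u\<in>S - {v}. z u ^ w u)"
proof (cases "v \<in> S")
  case True
  have "(\<Prod>u\<in>S. (z(v:=t)) u ^ w u) = (z(v:=t)) v ^ w v * (\<Prod>u\<in>S - {v}. (z(v:=t)) u ^ w u)"
    using assms True by (rule prod.remove)
  also have "(\<Prod>u\<in>S - {v}. (z(v:=t)) u ^ w u) = (\<Prod>u\<in>S - {v}. z u ^ w u)"
    by (rule prod.cong) auto
  finally show ?thesis using True by simp
next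
  case False
  hence "S - {v} = S" by blast
  thus ?thesis using False by (auto intro: prod.cong)
qed

lemma euler_monomial:
  assumes "finite S"
  shows "((\<lambda>t. \<Prod>u\<in>S. (z(v:=t)) u ^ w u) has_field_derivative
      (if v \<in> S then of_nat (w v) * z v ^ (w v - 1) * (\<Prod>u\<in>S - {v}. z u ^ w u) else 0)) (at (z v))"
    and "z v * (if v \<in> S then of_nat (w v) * z v ^ (w v - 1) * (\<Prod>u\<in>S - {v}. z u ^ w u) else 0)
      = (if v \<in> S then of_nat (w v) * (\<Prod>u\<in>S. z u ^ w u) else 0)"
proof -
  show "((\<lambda>t. \<Prod>u\<in>S. (z(v:=t)) u ^ w u) has_field_derivative
      (if v \<in> S then of_nat (w v) * z v ^ (w v - 1) * (\<Prod>u\<in>S - {v}. z u ^ w u) else 0)) (at (z v))"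
    unfolding prod_update_single[OF assms] by (cases "v \<in> S") (auto intro!: derivative_eq_intros)
  have "z v * z v ^ (w v - 1) = z v ^ w v" if "w v \<noteq> 0"
    using that by (simp add: power_eq_if)
  thus "z v * (if v \<in> S then of_nat (w v) * z v ^ (w v - 1) * (\<Prod>u\<in>S - {v}. z u ^ w u) else 0)
      = (if v \<in> S then of_nat (w v) * (\<Prod>u\<in>S. z u ^ w u) else 0)"
    using prod.remove[OF assms, of v "\<lambda>u. z u ^ w u"] by (cases "w v = 0") auto
qed

lemma DG_Zw:
  assumes V: "finite V"
  shows "DG V (Zw V E w \<beta>) z
    = (\<Sum>S\<in>Pow V. complex_of_real (\<beta> ^ cut_size E S) * (\<Prod>u\<in>S. z u ^ w u) * of_nat (\<Sum>v\<in>S. w v))"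
proof -
  let ?c = "\<lambda>S. complex_of_real (\<beta> ^ cut_size E S)"
  let ?X = "\<lambda>S. \<Prod>u\<in>S. z u ^ w u"
  let ?d = "\<lambda>v S. if v \<in> S then of_nat (w v) * z v ^ (w v - 1) * (\<Prod>u\<in>S - {v}. z u ^ w u) else 0"
  have fin: "\<And>S. S \<in> Pow V \<Longrightarrow> finite S" using V finite_subset by auto
  have partial: "z v * deriv (\<lambda>t. Zw V E w \<beta> (z(v := t))) (z v)
      = (\<Sum>S\<in>Pow V. if v \<in> S then ?c S * of_nat (w v) * ?X S else 0)" for v
  proof -
    have "((\<lambda>t. Zw V E w \<beta> (z(v := t))) has_field_derivative (\<Sum>S\<in>Pow V. ?c S * ?d v S)) (at (z v))"
      unfolding Zw_def by (intro DERIV_sum DERIV_cmult euler_monomial(1) fin)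
    hence "z v * deriv (\<lambda>t. Zw V E w \<beta> (z(v := t))) (z v) = (\<Sum>S\<in>Pow V. ?c S * (z v * ?d v S))"
      by (simp add: DERIV_imp_deriv sum_distrib_left algebra_simps)
    also have "\<dots> = (\<Sum>S\<in>Pow V. if v \<in> S then ?c S * of_nat (w v) * ?X S else 0)"
      by (rule sum.cong[OF refl]) (simp add: euler_monomial(2)[OF fin])
    finally show ?thesis .
  qed
  have "DG V (Zw V E w \<beta>) z = (\<Sum>S\<in>Pow V. \<Sum>v\<in>V. if v \<in> S then ?c S * of_nat (w v) * ?X S else 0)"
    unfolding DG_def partial by (rule sum.swap)
  also have "\<dots> = (\<Sum>S\<in>Pow V. ?c S * ?X S * of_nat (\<Sum>v\<in>S. w v))"
  proof (rule sum.cong[OF refl])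
    fix S assume S: "S \<in> Pow V"
    have "(\<Sum>v\<in>V. if v \<in> S then ?c S * of_nat (w v) * ?X S else 0)
        = (\<Sum>v\<in>V \<inter> S. ?c S * of_nat (w v) * ?X S)"
      using V by (rule sum.inter_restrict[symmetric])
    also have "V \<inter> S = S" using S by blast
    finally show "(\<Sum>v\<in>V. if v \<in> S then ?c S * of_nat (w v) * ?X S else 0)
        = ?c S * ?X S * of_nat (\<Sum>v\<in>S. w v)"
      by (simp add: sum_distrib_left sum_distrib_right algebra_simps)

  qed
  finally show ?thesis .
qed

section \<open>The one-variable polynomial along the ray l * z\<close>

definition ray_poly ::
  "'a set \<Rightarrow> 'a set set \<Rightarrow> ('a \<Rightarrow> nat) \<Rightarrow> real \<Rightarrow> ('a \<Rightarrow> complex) \<Rightarrow> complex poly" where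
  "ray_poly V E w \<beta> z = (\<Sum>S\<in>Pow V.
     monom (complex_of_real (\<beta> ^ cut_size E S) * (\<Prod>u\<in>S. z u ^ w u)) (\<Sum>v\<in>S. w v))"

lemma poly_ray_poly: "poly (ray_poly V E w \<beta> z) l = Zw V E w \<beta> (\<lambda>v. l * z v)"
  unfolding ray_poly_def Zw_def poly_sum poly_monom
  by (rule sum.cong[OF refl]) (simp add: power_mult_distrib prod.distrib power_sum)

lemma pderiv_ray_poly_at_1:
  assumes "finite V"
  shows "poly (pderiv (ray_poly V E w \<beta> z)) 1 = DG V (Zw V E w \<beta>) z"
proof -
  have "pderiv (ray_poly V E w \<beta> z) = (\<Sum>S\<in>Pow V.
      pderiv (monom (complex_of_real (\<beta> ^ cut_size E S) * (\<Prod>u\<in>S. z u ^ w u)) (\<Sum>v\<in>S. w v)))"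
    unfolding ray_poly_def using higher_pderiv_sum[of 1] by simp
  thus ?thesis unfolding DG_Zw[OF assms]
    by (simp add: poly_sum pderiv_monom poly_monom algebra_simps)
qed

lemma ray_poly_roots_in_disc:
  fixes \<beta> :: real
  assumes G: "simple_graph V E" and b: "0 < \<beta>" "\<beta> < 1"
    and w: "\<forall>v\<in>V. 0 < w v" and z: "\<forall>v\<in>V. 1 \<le> cmod (z v)"
    and root: "poly (ray_poly V E w \<beta> z) r = 0"
  shows "cmod r \<le> 1"
proof (rule ccontr)
  assume "\<not> cmod r \<le> 1"
  hence "\<forall>v\<in>V. 1 < cmod (r * z v)"
    using z by (auto simp: norm_mult intro: less_1_mult')
  hence "Zw V E w \<beta> (\<lambda>v. r * z v) \<noteq> 0" by (rule Zw_nonzero_exterior[OF G b w])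
  thus False using root by (simp add: poly_ray_poly)
qed

lemma sum_weights_eq_iff:
  fixes w :: "'a \<Rightarrow> nat"
  assumes V:
 "finite V" and S: "S \<subseteq> V" and w: "\<forall>v\<in>V. 0 < w v"
  shows "(\<Sum>v\<in>S. w v) = (\<Sum>v\<in>V. w v) \<longleftrightarrow> S = V"
proof
  assume eq: "(\<Sum>v\<in>S. w v) = (\<Sum>v\<in>V. w v)"
  have "(\<Sum>v\<in>V. w v) = (\<Sum>v\<in>V - S. w v) + (\<Sum>v\<in>S. w v)" using S V by (intro sum.subset_diff) auto
  hence "\<forall>v\<in>V - S. w v = 0" using eq V by simp
  hence "V \<subseteq> S" using w by (metis DiffI less_nat_zero_code subsetI)
  thus "S = V" using S by (rule subset_antisym[rotated])

qed simp

text \<open>The coefficient of l^W(V) comes from S = V alone and is nonzero, so deg p >= W(V) >= |V|.\<close>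
lemma card_le_degree_ray_poly:
  fixes \<beta> :: real
  assumes V: "finite V" and b: "0 < \<beta>" and w: "\<forall>v\<in>V. 0 < w v" and z: "\<forall>v\<in>V. z v \<noteq> 0"
  shows "card V \<le> Polynomial.degree (ray_poly V E w \<beta> z)"
proof -
  let ?W = "\<lambda>S. \<Sum>v\<in>S. w v"
  have "coeff (ray_poly V E w \<beta> z) (?W V)
      = (\<Sum>S\<in>Pow V. if S = V then complex_of_real (\<beta> ^ cut_size E S) * (\<Prod>u\<in>S. z u ^ w u) else 0)"
    unfolding ray_poly_def coeff_sum coeff_monom
    by (rule sum.cong[OF refl]) (use sum_weights_eq_iff[OF V _ w] in auto)
  also have "\<dots> = complex_of_real (\<beta> ^ cut_size E V) * (\<Prod>u\<in>V. z u ^ w u)" by (simp add: V)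
  also have "\<dots> \<noteq> 0" using z V b by simp
  finally have "?W V \<le> Polynomial.degree (ray_poly V E w \<beta> z)" by (rule le_degree)
  moreover have "card V \<le> ?W V"
    using sum_mono[of V "\<lambda>_. 1::nat" w] w by (simp add: Suc_le_eq)
  ultimately show ?thesis by linarith
qed

theorem theorem4:
  fixes V :: "'a set" and E :: "'a set set" and w :: "'a \<Rightarrow> nat"
    and \<beta> :: real and z :: "'a \<Rightarrow> complex"
  assumes "simple_graph V E"
    and "legal_weight V E w"
    and "0 < \<beta>" and "\<beta> < 1"
    and "\<forall>v\<in>V. 1 \<le> cmod (z v)"
    and "Zw V E w \<beta> z \<noteq> 0"
  shows "Re (DG V (Zw V E w \<beta>) z / Zw V E w \<beta> z) \<ge> real (card V) / 2"
proof -
  define p where "p = ray_poly V E w \<beta> z"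
  have V: "finite V" using assms(1) by (simp add: simple_graph_def)
  have w: "\<forall>v\<in>V. 0 < w v" using assms(2) by (simp add: legal_weight_def)
  have z0: "\<forall>v\<in>V. z v \<noteq> 0" using assms(5) by auto
  have p1: "poly p 1 = Zw V E w \<beta> z" unfolding p_def poly_ray_poly by simp
  have dp1: "poly (pderiv p) 1 = DG V (Zw V E w \<beta>) z"
    unfolding p_def by (rule pderiv_ray_poly_at_1[OF V])
  have roots: "\<forall>r. poly p r = 0 \<longrightarrow> cmod r \<le> 1"
    unfolding p_def using ray_poly_roots_in_disc[OF assms(1,3,4) w assms(5)] by blast
  have "real (card V) / 2 \<le> real (Polynomial.degree p) / 2"
    using card_le_degree_ray_poly[OF V assms(3) w z0] unfolding p_def by simp
  also have "\<dots> \<le> Re (poly (pderiv p) 1 / poly p 1)"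
    using Re_logderiv_ge_half_degree[OF _ roots refl] p1 assms(6) by simp
  finally show ?thesis unfolding p1 dp1 .

qed

end
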